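(* Let $S\in\mathcal S_d^2(\kappa)$, let $0<\tau\le\epsilon$ and $\eta\ge\tau+\kappa(\epsilon/2+2\tau)^2$, let $m\ge d+2$, and let $y_1,\dots,y_n$ be pairwise distinct points of $B(S,\tau)$. For $r>0$ and $i\in\{1,\dots,n\}$ let $\mathring G_{i,r}=\#\{j\ne i: y_j\in B(y_i,r)\}$. Define, for $i,j\in\{1,\dots,n\}$, $$\mathring W_{ij}=\sum_{(i_1,\dots,i_{m-2})\in\{1,\dots,n\}^{m-2}}\alpha_d(y_i,y_j,y_{i_1},\dots,y_{i_{m-2}}),\qquad \mathring D_i=\sum_{j=1}^n\mathring W_{ij}.$$ Then for all $i\neq j$, $$\mathbf 1_{\{\|y_i-y_j\|<\epsilon/2\}}\,(\mathring G_{i,\epsilon/2}-1)^{\{m-2\}}\le\mathring W_{ij}\le\mathbf 1_{\{\|y_i-y_j\|<\epsilon\}}\,(\mathring G_{i,\epsilon}-1)^{\{m-2\}},$$ and for all $i$, $$\mathring G_{i,\epsilon/2}\,(\mathring G_{i,\epsilon/2}-1)^{\{m-2\}}\le\mathring D_i\le\mathring G_{i,\epsilon}\,(\mathring G_{i,\epsilon}-1)^{\{m-2\}},$$ where $r^{\{q\}}=r(r-1)\cdots(r-q+1)$.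
   Context: $B(x,r)$ is the open Euclidean ball; $B(S,\tau)=\{x\in\mathbb R^D:\mathrm{dist}(x,S)<\tau\}$. $\mathcal A_d$ is the set of $d$-dimensional affine subspaces of $\mathbb R^D$. For $m\ge d+2$ points, $\Lambda_d(z_1,\dots,z_m)=\min_{L\in\mathcal A_d}\max_{j}\mathrm{dist}(z_j,L)$. Given $\epsilon,\eta>0$, the affinity $\alpha_d(z_1,\dots,z_m)$ equals $0$ if $z_1,\dots,z_m$ are not pairwise distinct, and otherwise equals $\mathbf 1\{\mathrm{diam}\{z_1,\dots,z_m\}<\epsilon\}\cdot\mathbf 1\{\Lambda_d(z_1,\dots,z_m)<\eta\}$ (simple kernel). The reach of $S$ is the supremum of $t>0$ such that every $x$ with $\mathrm{dist}(x,S)<t$ has a unique nearest point in $S$. For $1\le d\le D-1$ and $\kappa\ge1$, $\mathcal S_d^2(\kappa)$ is the class of $d$-dimensional connected $C^2$ submanifolds $S\subset(0,1)^D$ without boundary with $1/\kappa\le\mathrm{diam}(S)\le\kappa$ and $\mathrm{reach}(S)\ge1/\kappa$. *)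

theory Defs
  imports "HOL-Analysis.Analysis"
begin

definition C2_on :: "'b::euclidean_space set \<Rightarrow> ('b \<Rightarrow> 'a::euclidean_space) \<Rightarrow> bool" where
  "C2_on V f \<longleftrightarrow> (\<exists>f' f''.
      (\<forall>x\<in>V. (f has_derivative blinfun_apply (f' x)) (at x)) \<and>
      (\<forall>x\<in>V. (f' has_derivative blinfun_apply (f'' x)) (at x)) \<and>
      continuous_on V f'' \<and>
      (\<forall>x\<in>V. inj (blinfun_apply (f' x))))"

text \<open>S is an embedded C^2 submanifold without boundary, of dimension DIM('b):
  around every point, S is locally the homeomorphic image of an open subset of 'b
  under a C^2 immersion.\<close>
definition C2_submanifold :: "'b::euclidean_space itself \<Rightarrow> 'a::euclidean_space set \<Rightarrow> bool" where
  "C2_submanifold _ S \<longleftrightarrow> (\<forall>p\<in>S. \<exists>U (V::'b set) \<phi> \<psi>.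
      open U \<and> p \<in> U \<and> open V \<and> C2_on V \<phi> \<and> homeomorphism V (S \<inter> U) \<phi> \<psi>)"

definition reach :: "'a::euclidean_space set \<Rightarrow> ereal" where
  "reach S = Sup {ereal t | t. t > 0 \<and>
      (\<forall>x. infdist x S < t \<longrightarrow> (\<exists>!p. p \<in> S \<and> dist x p = infdist x S))}"

text \<open>The class S_d^2(kappa); d = DIM('b), D = DIM('a).\<close>
definition in_class_S2 :: "'b::euclidean_space itself \<Rightarrow> real \<Rightarrow> 'a::euclidean_space set \<Rightarrow> bool" where
  "in_class_S2 B \<kappa> S \<longleftrightarrow> C2_submanifold B S \<and> S \<noteq> {} \<and> connected S \<and> S \<subseteq> box 0 One \<and>
      1 / \<kappa> \<le> diameter S \<and> diameter S \<le> \<kappa> \<and> reach S \<ge> ereal (1 / \<kappa>)"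

text \<open>Lambda_d: min over d-dimensional affine subspaces L of max_j dist(z_j, L)
  (the minimum is attained, so we write it as an infimum).\<close>
definition Lambda :: "nat \<Rightarrow> 'a::euclidean_space list \<Rightarrow> real" where
  "Lambda d zs = Inf {Max ((\<lambda>z. infdist z L) ` set zs) | L. affine L \<and> L \<noteq> {} \<and> aff_dim L = int d}"

definition alpha :: "nat \<Rightarrow> real \<Rightarrow> real \<Rightarrow> 'a::euclidean_space list \<Rightarrow> real" where
  "alpha d \<epsilon> \<eta> zs = (if distinct zs \<and> diameter (set zs) < \<epsilon> \<and> Lambda d zs < \<eta> then 1 else 0)"

definition ffall :: "real \<Rightarrow> nat \<Rightarrow> real" where
  "ffall r q = (\<Prod>k<q. r - real k)"

definition Gcount :: "(nat \<Rightarrow> 'a::metric_space) \<Rightarrow> nat \<Rightarrow> nat \<Rightarrow> real \<Rightarrow> real" where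
  "Gcount y n i r = real (card {j \<in> {1..n}. j \<noteq> i \<and> y j \<in> ball (y i) r})"

definition Wmat :: "nat \<Rightarrow> real \<Rightarrow> real \<Rightarrow> nat \<Rightarrow> (nat \<Rightarrow> 'a::euclidean_space) \<Rightarrow> nat \<Rightarrow> nat \<Rightarrow> nat \<Rightarrow> real" where
  "Wmat d \<epsilon> \<eta> m y n i j =
     (\<Sum>is \<in> {is. length is = m - 2 \<and> set is \<subseteq> {1..n}}. alpha d \<epsilon> \<eta> (y i # y j # map y is))"

definition Ddeg :: "nat \<Rightarrow> real \<Rightarrow> real \<Rightarrow> nat \<Rightarrow> (nat \<Rightarrow> 'a::euclidean_space) \<Rightarrow> nat \<Rightarrow> nat \<Rightarrow> real" where
  "Ddeg d \<epsilon> \<eta> m y n i = (\<Sum>j=1..n. Wmat d \<epsilon> \<eta> m y n i j)"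

end

theory Submission
  imports Defs
begin

(* The upper bounds are pure counting: a tuple with nonzero affinity consists of distinct
   points of diameter < epsilon, so its free indices form a list of distinct
   epsilon-neighbours of y_i other than y_j; there are (G_{i,epsilon} - 1)^{m-2} of them.

   The lower bounds need geometry: every such tuple of (epsilon/2)-neighbours must have
   affinity one, i.e. be eta-flat.  The key fact (tangent_bound) is that S lies within
   kappa |q - p|^2 of its tangent plane at p.  It is proved in three steps:
   (1) near p, a C^2 chart gives a quadratic bound, hence small clear normal balls;
   (2) reach >= 1/kappa lets these clear normal balls grow up to radius 1/(2 kappa),
       via a Brouwer fixed-point argument along the normal ray (normal_clear_extend);
   (3) the clear ball of radius 1/(2 kappa) yields the global quadratic bound. *)

definition unique_nearest :: "'a::euclidean_space set \<Rightarrow> real \<Rightarrow> bool" where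
  "unique_nearest S t \<longleftrightarrow> (\<forall>x. infdist x S < t \<longrightarrow> (\<exists>!p. p \<in> S \<and> dist x p = infdist x S))"

lemma reach_unique_nearest:
  assumes "reach S \<ge> ereal c" "r < c"
  shows "\<exists>t>r. unique_nearest S t"
proof -
  have "ereal r < ereal c" using assms(2) by simp
  then have "ereal r < reach S" using assms(1) by (rule less_le_trans)
  then obtain q where "q \<in> {ereal t | t. t > 0 \<and> unique_nearest S t}" "ereal r < q"
    unfolding reach_def unique_nearest_def less_Sup_iff by blast
  then show ?thesis by auto
qed

(* Unique nearest points exist in particular for points of the closure, so S is closed. *)
lemma unique_nearest_closed:
  assumes "unique_nearest S t" "t > 0" "S \<noteq> {}"
  shows "closed S"
proof -
  have "x \<in> S" if "x \<in> closure S" for x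
  proof -
    have "infdist x S = 0" using that assms(3) in_closure_iff_infdist_zero by blast
    then have "\<exists>!p. p \<in> S \<and> dist x p = 0"
      using assms(1,2) unfolding unique_nearest_def by metis
    then show ?thesis by auto
  qed
  then show ?thesis using closure_subset_eq by blast
qed

(* The nearest-point map; it is meaningful on a closed nonempty set. *)
definition nearest :: "'a::euclidean_space set \<Rightarrow> 'a \<Rightarrow> 'a" where
  "nearest S x = (SOME p. p \<in> S \<and> dist x p = infdist x S)"

lemma nearest_point:
  assumes "closed S" "S \<noteq> {}"
  shows "nearest S x \<in> S" "dist x (nearest S x) = infdist x S"
proof -
  have "\<exists>p. p \<in> S \<and> dist x p = infdist x S"
    using infdist_attains_inf[OF assms] by metis
  from someI_ex[OF this] show "nearest S x \<in> S" "dist x (nearest S x) = infdist x S"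
    unfolding nearest_def by auto
qed

lemma infdist_ge:
  assumes "S \<noteq> {}" "\<And>q. q \<in> S \<Longrightarrow> e \<le> dist x q"
  shows "e \<le> infdist x S"
  unfolding infdist_notempty[OF assms(1)] by (rule cINF_greatest) (use assms in auto)

lemma nearest_eq:
  assumes "unique_nearest S t" "closed S" "S \<noteq> {}" "infdist x S < t" "p \<in> S" "dist x p = infdist x S"
  shows "nearest S x = p"
  using assms nearest_point[OF assms(2,3), of x] unfolding unique_nearest_def by blast

(* The nearest-point map is continuous on the tube: its graph is closed and S is compact. *)
lemma continuous_on_nearest:
  assumes "unique_nearest S t" "compact S" "S \<noteq> {}"
  shows "continuous_on {x. infdist x S < t} (nearest S)"
proof -
  let ?O = "{x. infdist x S < t}"
  have cl: "closed S" using assms compact_imp_closed by blast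
  have maps: "nearest S \<in> ?O \<rightarrow> S" using nearest_point[OF cl assms(3)] by blast
  have graph: "(\<lambda>x. (x, nearest S x)) ` ?O = (?O \<times> S) \<inter> {z. dist (fst z) (snd z) - infdist (fst z) S = 0}"
    using nearest_eq[OF assms(1) cl assms(3)] nearest_point[OF cl assms(3)] by (auto simp: image_iff)
  have "closed {z::'a \<times> 'a. dist (fst z) (snd z) - infdist (fst z) S = 0}"
    by (intro closed_Collect_eq continuous_intros continuous_on_infdist)
  then have "closedin (top_of_set (?O \<times> S)) ((\<lambda>x. (x, nearest S x)) ` ?O)"
    unfolding graph by (simp add: closedin_closed_Int)
  then show ?thesis using continuous_closed_graph_eq[OF assms(2) maps] by blast
qed

lemma nearest_segment:
  assumes "unique_nearest S t" "closed S" "S \<noteq> {}" "infdist x S < t" "0 \<le> l" "l \<le> 1"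
  shows "nearest S (nearest S x + l *\<^sub>R (x - nearest S x)) = nearest S x"
proof -
  define a where "a = nearest S x"
  define y where "y = a + l *\<^sub>R (x - a)"
  have aS: "a \<in> S" and dxa: "dist x a = infdist x S" using nearest_point[OF assms(2,3)] a_def by auto
  have dya: "dist y a = l * norm (x - a)" using assms(5) by (simp add: y_def dist_norm)
  have "x - y = (1 - l) *\<^sub>R (x - a)" by (simp add: y_def algebra_simps)
  then have dxy: "dist x y = (1 - l) * norm (x - a)" using assms(6) by (simp add: dist_norm)
  have "dist y a \<le> dist y q" if "q \<in> S" for q
  proof -
    have "dist x a \<le> dist x q" using dxa infdist_le[OF that] by simp
    also have "\<dots> \<le> dist x y + dist y q" by (rule dist_triangle)
    finally show ?thesis using dya dxy by (simp add: dist_norm algebra_simps)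
  qed
  then have "dist y a \<le> infdist y S" using infdist_ge[OF assms(3)] by blast
  then have eq: "dist y a = infdist y S" using infdist_le[OF aS, of y] by simp
  have "infdist y S \<le> infdist x S"
    using eq dya dxa assms(5,6) infdist_nonneg[of x S]
    by (simp add: dist_norm) (metis mult_left_le_one_le)
  then have "nearest S y = a" using nearest_eq[OF assms(1,2,3) _ aS eq] assms(4) by simp
  then show ?thesis by (simp add: y_def a_def)
qed

definition normal_clear :: "'a::euclidean_space set \<Rightarrow> 'a \<Rightarrow> 'a \<Rightarrow> real \<Rightarrow> bool" where
  "normal_clear S a v t \<longleftrightarrow> (\<forall>q\<in>S. t \<le> dist (a + t *\<^sub>R v) q)"

lemma normal_clear_nearest:
  assumes "unique_nearest S t0" "closed S" "S \<noteq> {}" "a \<in> S" "0 \<le> t" "t < t0" "norm v = 1"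
    and "normal_clear S a v t"
  shows "nearest S (a + t *\<^sub>R v) = a" "infdist (a + t *\<^sub>R v) S = t"
proof -
  have d: "dist (a + t *\<^sub>R v) a = t" using assms(5,7) by (simp add: dist_norm)
  have "t \<le> infdist (a + t *\<^sub>R v) S"
    using infdist_ge[OF assms(3)] assms(8) unfolding normal_clear_def by blast
  moreover have "infdist (a + t *\<^sub>R v) S \<le> t" using infdist_le[OF assms(4)] d by metis
  ultimately show inf: "infdist (a + t *\<^sub>R v) S = t" by simp
  show "nearest S (a + t *\<^sub>R v) = a"
    using nearest_eq[OF assms(1,2,3) _ assms(4)] inf d assms(6) by simp
qed

(* Brouwer step: the map sending z to the point at distance tau + rho from its nearest
   point, on the ray from that nearest point through c, has a fixed point near c. *)
lemma push_away_fixpoint: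
  assumes "unique_nearest S t0" "compact S" "S \<noteq> {}"
    and c: "infdist c S = \<tau>" "0 < \<tau>" and \<rho>: "0 < \<rho>" "\<tau> + 2 * \<rho> < t0"
  shows "\<exists>z. dist c z \<le> \<rho> \<and>
           z = c + max 0 (\<tau> + \<rho> - norm (c - nearest S z)) *\<^sub>R sgn (c - nearest S z)"
proof -
  have cl: "closed S" using assms(2) compact_imp_closed by blast
  define K where "K = cball c \<rho>"
  define F where "F z = c + max 0 (\<tau> + \<rho> - norm (c - nearest S z)) *\<^sub>R sgn (c - nearest S z)" for z
  have "infdist z S < t0" if "z \<in> K" for z
  proof -
    have "infdist z S \<le> infdist c S + dist z c" by (rule infdist_triangle)
    also have "\<dots> \<le> \<tau> + \<rho>" using that c by (auto simp: K_def dist_commute)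
    finally show ?thesis using \<rho> by simp
  qed
  then have cont_nearest: "continuous_on K (nearest S)"
    by (intro continuous_on_subset[OF continuous_on_nearest[OF assms(1,2,3)]]) auto
  have far: "\<tau> \<le> norm (c - nearest S z)" for z
    using infdist_le[OF nearest_point(1)[OF cl assms(3)], of c z] c by (simp add: dist_norm)
  have "continuous_on K F"
    unfolding F_def
    by (intro continuous_intros cont_nearest) (use far c in \<open>metis norm_zero not_le\<close>)
  moreover have "F \<in> K \<rightarrow> K"
  proof
    fix z assume "z \<in> K"
    have "c \<noteq> nearest S z" using far[of z] c(2) by auto
    then have "dist c (F z) = max 0 (\<tau> + \<rho> - norm (c - nearest S z))"
      by (simp add: F_def dist_norm norm_sgn)
    also have "\<dots> \<le> \<rho>" using far[of z] \<rho> by simp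
    finally show "F z \<in> K" by (simp add: K_def)
  qed
  ultimately obtain z where "z \<in> K" "F z = z"
    using brouwer[of K F] \<rho> by (auto simp: K_def)
  then show ?thesis by (auto simp: K_def F_def)
qed

(* The clear normal radius at a can be increased while it stays below the tube radius:
   the fixed point above lies on the normal ray through a at distance tau + rho. *)
lemma normal_clear_step:
  assumes un: "unique_nearest S t0" and cpt: "compact S" and ne: "S \<noteq> {}" and aS: "a \<in> S"
    and v: "norm v = 1" and clear: "normal_clear S a v \<tau>" and \<tau>: "0 < \<tau>" "\<tau> < r" "r < t0"
  shows "\<exists>s>\<tau>. s \<le> r \<and> normal_clear S a v s"
proof -
  have cl: "closed S" using cpt compact_imp_closed by blast
  define c where "c = a + \<tau> *\<^sub>R v"
  have nc: "nearest S c = a" and ic: "infdist c S = \<tau>"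
    using normal_clear_nearest[OF un cl ne aS _ _ v clear] \<tau> by (auto simp: c_def)
  define \<rho> where "\<rho> = min (r - \<tau>) ((t0 - \<tau>) / 3)"
  have \<rho>: "0 < \<rho>" "\<rho> \<le> r - \<tau>" "\<tau> + 2 * \<rho> < t0" using \<tau> unfolding \<rho>_def by (auto simp: min_def divide_simps)
  define s where "s = \<tau> + \<rho>"
  obtain z where dz: "dist c z \<le> \<rho>"
    and fz: "z = c + max 0 (s - norm (c - nearest S z)) *\<^sub>R sgn (c - nearest S z)"
    using push_away_fixpoint[OF un cpt ne ic \<tau>(1) \<rho>(1,3)] unfolding s_def by blast
  define b where "b = nearest S z"
  define N where "N = norm (c - b)"
  have N: "\<tau> \<le> N" "c \<noteq> b"
    using infdist_le[OF nearest_point(1)[OF cl ne], of c z] ic \<tau>(1) by (auto simp: N_def b_def dist_norm)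
  have "N < s"
  proof (rule ccontr)
    assume "\<not> N < s"
    then have "z = c" using fz by (simp add: N_def b_def)
    then have "N = \<tau>" using nc v \<tau>(1) by (simp add: N_def b_def c_def)
    then show False using \<open>\<not> N < s\<close> \<rho> by (simp add: s_def)
  qed
  then have z: "z = c + (s - N) *\<^sub>R sgn (c - b)" using fz by (simp add: N_def b_def)
  have "sgn (c - b) = (1 / N) *\<^sub>R (c - b)" by (simp add: sgn_div_norm N_def divide_inverse)
  then have "z - b = (c - b) + ((s - N) / N) *\<^sub>R (c - b)"
    by (simp add: z diff_add_eq)
  also have "\<dots> = (1 + (s - N) / N) *\<^sub>R (c - b)" by (simp add: algebra_simps)
  also have "1 + (s - N) / N = s / N" using N \<tau>(1) by (simp add: field_simps)
  finally have "z - b = (s / N) *\<^sub>R (c - b)" .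
  then have c_on_segment: "c = b + (N / s) *\<^sub>R (z - b)"
    using N \<tau>(1) \<rho>(1) by (simp add: s_def)
  have "infdist z S \<le> infdist c S + dist z c" by (rule infdist_triangle)
  then have "infdist z S < t0" using ic dz \<rho> by (simp add: dist_commute)
  then have "nearest S c = b"
    using nearest_segment[OF un cl ne \<open>infdist z S < t0\<close>, of "N / s"] N \<tau>(1) \<open>N < s\<close> c_on_segment
    by (simp add: b_def)
  then have ba: "b = a" using nc by simp
  then have "N = \<tau>" using v \<tau>(1) by (simp add: N_def c_def)
  have za: "z = a + s *\<^sub>R v"
    using v \<tau>(1) by (simp add: z ba \<open>N = \<tau>\<close> c_def sgn_div_norm algebra_simps)
  have "infdist z S = dist z a" using nearest_point(2)[OF cl ne, of z] b_def ba by simp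
  then have "normal_clear S a v s"
    using infdist_le[of _ S z] za v \<rho>(1) \<tau>(1) by (auto simp: normal_clear_def dist_norm s_def)
  then show ?thesis using \<rho> by (intro exI[of _ s]) (simp add: s_def)
qed

(* Hence the set of clear radii is all of [t1, r]; the supremum argument closes it. *)
lemma normal_clear_extend:
  assumes un: "unique_nearest S t0" and cpt: "compact S" and ne: "S \<noteq> {}" and aS: "a \<in> S"
    and v: "norm v = 1" and t1: "0 < t1" "t1 \<le> r" "r < t0" and clear: "normal_clear S a v t1"
  shows "normal_clear S a v r"
proof -
  define J where "J = {t1..r} \<inter> (\<Inter>q\<in>S. {t. t \<le> dist (a + t *\<^sub>R v) q})"
  have J: "t \<in> J \<longleftrightarrow> t1 \<le> t \<and> t \<le> r \<and> normal_clear S a v t" for t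
    by (auto simp: J_def normal_clear_def)
  have "closed J" unfolding J_def
    by (intro closed_Int closed_INT closed_atLeastAtMost ballI closed_Collect_le continuous_intros)
  moreover have "bdd_above J" "J \<noteq> {}" using J clear t1 by (auto simp: bdd_above_def)
  ultimately have "Sup J \<in> J" using closed_contains_Sup by blast
  then have sup: "t1 \<le> Sup J" "Sup J \<le> r" "normal_clear S a v (Sup J)" using J by auto
  show ?thesis
  proof (cases "Sup J = r")
    case False
    then obtain s where "Sup J < s" "s \<le> r" "normal_clear S a v s"
      using normal_clear_step[OF un cpt ne aS v sup(3), of r] sup t1 by fastforce
    then have "s \<in> J" using J sup by auto
    then show ?thesis using \<open>Sup J < s\<close> cSup_upper[OF _ \<open>bdd_above J\<close>] by fastforce
  qed (use sup in auto)
qed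

lemma C2_taylor_bound:
  fixes \<phi> :: "'b::euclidean_space \<Rightarrow> 'a::euclidean_space"
  assumes V: "open V" "u0 \<in> V"
    and d1: "\<forall>x\<in>V. (\<phi> has_derivative blinfun_apply (f' x)) (at x)"
    and d2: "\<forall>x\<in>V. (f' has_derivative blinfun_apply (f'' x)) (at x)"
    and c2: "continuous_on V f''"
  shows "\<exists>\<delta>>0. \<exists>M>0. cball u0 \<delta> \<subseteq> V \<and>
     (\<forall>u\<in>cball u0 \<delta>. norm (\<phi> u - \<phi> u0 - blinfun_apply (f' u0) (u - u0)) \<le> M * (norm (u - u0))\<^sup>2)"
proof -
  obtain \<delta> where \<delta>: "\<delta> > 0" "cball u0 \<delta> \<subseteq> V" using V open_contains_cball by blast
  have "compact (f'' ` cball u0 \<delta>)"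
    by (rule compact_continuous_image[OF continuous_on_subset[OF c2 \<delta>(2)]]) simp
  then obtain M where M: "M > 0" "\<forall>x\<in>cball u0 \<delta>. norm (f'' x) \<le> M"
    using compact_imp_bounded bounded_pos by (metis imageI)
  have lip: "norm (f' w - f' u0) \<le> M * norm (w - u0)" if "w \<in> cball u0 \<delta>" for w
  proof (rule differentiable_bound[OF convex_cball _ _ that])
    show "(f' has_derivative blinfun_apply (f'' x)) (at x within cball u0 \<delta>)" if "x \<in> cball u0 \<delta>" for x
      using d2 \<delta>(2) that has_derivative_at_withinI by blast
    show "onorm (blinfun_apply (f'' x)) \<le> M" if "x \<in> cball u0 \<delta>" for x
      using M(2) that by (simp add: norm_blinfun.rep_eq[symmetric])
  qed (use \<delta>(1) in simp)
  have "norm (\<phi> u - \<phi> u0 - blinfun_apply (f' u0) (u - u0)) \<le> M * (norm (u - u0))\<^sup>2"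
    if u: "u \<in> cball u0 \<delta>" for u
  proof -
    define \<rho> where "\<rho> = norm (u - u0)"
    have sub: "cball u0 \<rho> \<subseteq> cball u0 \<delta>" using u by (auto simp: \<rho>_def dist_norm norm_minus_commute)
    have "norm (\<phi> u - \<phi> u0 - blinfun_apply (f' u0) (u - u0)) \<le> norm (u - u0) * (M * \<rho>)"
    proof (rule differentiable_bound_linearization[of u0 u "cball u0 \<rho>" \<phi> _ u0])
      show "u0 + t *\<^sub>R (u - u0) \<in> cball u0 \<rho>" if "t \<in> {0..1}" for t
      proof -
        have "dist u0 (u0 + t *\<^sub>R (u - u0)) = t * \<rho>" using that by (simp add: \<rho>_def dist_norm)
        also have "\<dots> \<le> \<rho>" using that by (simp add: \<rho>_def mult_left_le_one_le)
        finally show ?thesis by simp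
      qed
      show "(\<phi> has_derivative blinfun_apply (f' x)) (at x within cball u0 \<rho>)" if "x \<in> cball u0 \<rho>" for x
        using d1 \<delta>(2) sub that has_derivative_at_withinI by blast
      show "onorm (blinfun_apply (f' x) - blinfun_apply (f' u0)) \<le> M * \<rho>" if "x \<in> cball u0 \<rho>" for x
      proof -
        have "norm (f' x - f' u0) \<le> M * norm (x - u0)" using lip[of x] sub that by blast
        also have "\<dots> \<le> M * \<rho>"
          using that M(1) by (intro mult_left_mono) (simp_all add: dist_norm norm_minus_commute)
        finally have "norm (f' x - f' u0) \<le> M * \<rho>" .
        then have "onorm (blinfun_apply (f' x - f' u0)) \<le> M * \<rho>" by (simp add: norm_blinfun.rep_eq)
        then show ?thesis by (simp add: minus_blinfun.rep_eq fun_diff_def)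
      qed
    qed (simp add: \<rho>_def)
    then show ?thesis by (simp add: \<rho>_def power2_eq_square algebra_simps)
  qed
  then show ?thesis using \<delta> M by blast
qed

lemma normal_component_quadratic:
  fixes x w v :: "'a::real_inner"
  assumes close: "norm (x - w) \<le> M * e\<^sup>2" and lower: "c * e \<le> norm w" and small: "M * e \<le> c / 2"
    and perp: "inner w v = 0" and v: "norm v = 1" and pos: "0 < c" "0 < M" "0 \<le> e"
  shows "inner x v \<le> (4 * M / c\<^sup>2) * (norm x)\<^sup>2"
proof -
  have "inner x v = inner (x - w) v" using perp by (simp add: inner_diff_left)
  also have "\<dots> \<le> norm (x - w) * norm v" by (rule norm_cauchy_schwarz)
  also have "\<dots> \<le> M * e\<^sup>2" using close v by simp
  finally have component: "inner x v \<le> M * e\<^sup>2" .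
  have "M * e\<^sup>2 \<le> (c / 2) * e"
    using mult_right_mono[OF small pos(3)] by (simp add: power2_eq_square mult.assoc)
  moreover have "c * e \<le> norm x + norm (x - w)"
    using lower norm_triangle_sub[of w x] by (simp add: norm_minus_commute)
  ultimately have half: "(c / 2) * e \<le> norm x" using close by simp
  have "M * e\<^sup>2 = (4 * M / c\<^sup>2) * ((c / 2) * e)\<^sup>2" using pos by (simp add: power2_eq_square field_simps)
  also have "\<dots> \<le> (4 * M / c\<^sup>2) * (norm x)\<^sup>2"
    using half pos by (intro mult_left_mono power_mono) auto
  finally show ?thesis using component by simp
qed

lemma chart_local_quadratic:
  fixes \<phi> :: "'b::euclidean_space \<Rightarrow> 'a::euclidean_space"
  assumes V: "open V" "u0 \<in> V"
    and d1: "\<forall>x\<in>V. (\<phi> has_derivative blinfun_apply (f' x)) (at x)"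
    and d2: "\<forall>x\<in>V. (f' has_derivative blinfun_apply (f'' x)) (at x)"
    and c2: "continuous_on V f''" and inj: "inj (blinfun_apply (f' u0))"
    and U: "open U" and hom: "homeomorphism V (S \<inter> U) \<phi> \<psi>" and pu0: "\<phi> u0 = p"
    and v: "norm v = 1" and perp: "\<And>h. inner (blinfun_apply (f' u0) h) v = 0"
  shows "\<exists>K>0. \<exists>e>0. \<forall>q\<in>S. dist q p < e \<longrightarrow> inner (q - p) v \<le> K * (norm (q - p))\<^sup>2"
proof -
  define A where "A = blinfun_apply (f' u0)"
  obtain \<delta> M where \<delta>: "\<delta> > 0" "M > 0" "cball u0 \<delta> \<subseteq> V"
    and taylor: "\<And>u. u \<in> cball u0 \<delta> \<Longrightarrow> norm (\<phi> u - p - A (u - u0)) \<le> M * (norm (u - u0))\<^sup>2"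
    using C2_taylor_bound[OF V d1 d2 c2] pu0 unfolding A_def by blast
  obtain c where c: "c > 0" "\<And>x. c * norm x \<le> norm (A x)"
    using linear_inj_bounded_below_pos[of A] inj blinfun.bounded_linear_right bounded_linear.linear
    unfolding A_def by metis
  define \<delta>' where "\<delta>' = min \<delta> (c / (2 * M))"
  have \<delta>': "\<delta>' > 0" using \<delta> c by (simp add: \<delta>'_def)
  define K where "K = 4 * M / c\<^sup>2"
  have chart_bound: "inner (\<phi> u - p) v \<le> K * (norm (\<phi> u - p))\<^sup>2" if u: "u \<in> cball u0 \<delta>'" for u
  proof (rule normal_component_quadratic[OF _ c(2) _ perp[unfolded A_def[symmetric]] v c(1) \<delta>(2), unfolded K_def[symmetric]])
    have "u \<in> cball u0 \<delta>" using u by (simp add: \<delta>'_def)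
    then show "norm (\<phi> u - p - A (u - u0)) \<le> M * (norm (u - u0))\<^sup>2" by (rule taylor)
    have e: "norm (u - u0) \<le> \<delta>'" using u by (simp add: dist_norm norm_minus_commute)
    show "M * norm (u - u0) \<le> c / 2"
      using e \<delta>(2) by (simp add: \<delta>'_def field_simps)
  qed simp
  have pSU: "p \<in> S \<inter> U" and \<psi>p: "\<psi> p = u0"
    using hom V(2) pu0 homeomorphism_apply1 unfolding homeomorphism_def by blast+
  obtain e where e: "e > 0" "\<And>q. q \<in> S \<inter> U \<Longrightarrow> dist q p < e \<Longrightarrow> dist (\<psi> q) u0 < \<delta>'"
    using homeomorphism_cont2[OF hom] pSU \<delta>' \<psi>p unfolding continuous_on_iff by force
  obtain eU where eU: "eU > 0" "ball p eU \<subseteq> U" using U pSU open_contains_ball by blast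
  have "inner (q - p) v \<le> K * (norm (q - p))\<^sup>2" if "q \<in> S" "dist q p < min e eU" for q
  proof -
    have qU: "q \<in> S \<inter> U" using that eU by (auto simp: dist_commute subset_iff)
    then have "\<psi> q \<in> cball u0 \<delta>'" using e(2) that by (simp add: dist_commute less_imp_le)
    moreover have "\<phi> (\<psi> q) = q" using hom qU homeomorphism_apply2 by metis
    ultimately show ?thesis using chart_bound by metis
  qed
  moreover have "K > 0" using \<delta> c by (simp add: K_def)
  ultimately show ?thesis using e(1) eU(1) by (intro exI[of _ K] conjI exI[of _ "min e eU"]) auto
qed

lemma dist_ray_sq:
  fixes p q v :: "'a::real_inner"
  assumes "norm v = 1"
  shows "(dist (p + t *\<^sub>R v) q)\<^sup>2 = (norm (q - p))\<^sup>2 - 2 * t * inner (q - p) v + t\<^sup>2"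
proof -
  define w where "w = q - p"
  have "dist (p + t *\<^sub>R v) q = norm (t *\<^sub>R v - w)" by (simp add: w_def dist_norm algebra_simps)
  moreover have "(norm (t *\<^sub>R v - w))\<^sup>2 = t\<^sup>2 * inner v v - 2 * t * inner w v + inner w w"
    unfolding power2_norm_eq_inner
    by (simp add: inner_diff_left inner_diff_right inner_commute power2_eq_square)
  moreover have "inner v v = 1" using assms by (simp add: power2_norm_eq_inner[symmetric])
  ultimately show ?thesis by (simp add: w_def power2_norm_eq_inner)
qed

lemma quadratic_normal_clear:
  assumes K: "0 < K" and e: "0 < e" and v: "norm v = 1"
    and quad: "\<forall>q\<in>S. dist q p < e \<longrightarrow> inner (q - p) v \<le> K * (norm (q - p))\<^sup>2"
  shows "\<exists>t1>0. \<forall>t. 0 < t \<and> t \<le> t1 \<longrightarrow> normal_clear S p v t"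
proof -
  define t1 where "t1 = min (1 / (2 * K)) (e / 2)"
  have "t \<le> dist (p + t *\<^sub>R v) q" if t: "0 < t" "t \<le> t1" and q: "q \<in> S" for t q
  proof (cases "dist q p < e")
    case True
    have "2 * t * inner (q - p) v \<le> (2 * t * K) * (norm (q - p))\<^sup>2" using quad q True t by simp
    also have "\<dots> \<le> (norm (q - p))\<^sup>2"
      using t K by (intro mult_left_le_one_le) (auto simp: t1_def field_simps)
    finally have "t\<^sup>2 \<le> (dist (p + t *\<^sub>R v) q)\<^sup>2" using dist_ray_sq[OF v, of p t q] by simp
    then show ?thesis by (rule power2_le_imp_le) simp
  next
    case False
    have "dist p q \<le> dist p (p + t *\<^sub>R v) + dist (p + t *\<^sub>R v) q" by (rule dist_triangle)
    moreover have "dist p (p + t *\<^sub>R v) = t" using t v by (simp add: dist_norm)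
    moreover have "t \<le> e / 2" using t by (simp add: t1_def)
    ultimately show ?thesis using False by (simp add: dist_commute)
  qed
  moreover have "t1 > 0" using K e by (simp add: t1_def)
  ultimately show ?thesis unfolding normal_clear_def by blast
qed

lemma class_S2_basic:
  assumes S: "in_class_S2 TYPE('b::euclidean_space) \<kappa> S" and kappa: "\<kappa> \<ge> 1"
  shows "\<exists>t0 > 1 / (2 * \<kappa>). unique_nearest S t0" "compact S" "S \<noteq> {}"
proof -
  have r: "reach S \<ge> ereal (1 / \<kappa>)" and ne: "S \<noteq> {}" and box: "S \<subseteq> box 0 One"
    using S unfolding in_class_S2_def by auto
  have "1 / (2 * \<kappa>) < 1 / \<kappa>" using kappa by (simp add: field_simps)
  then show "\<exists>t0 > 1 / (2 * \<kappa>). unique_nearest S t0" using reach_unique_nearest[OF r] by blast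
  then obtain t0 where "t0 > 1 / (2 * \<kappa>)" "unique_nearest S t0" by blast
  moreover have "0 < 1 / (2 * \<kappa>)" using kappa by simp
  ultimately have "closed S" using unique_nearest_closed ne by (meson order.strict_trans)
  moreover have "bounded S" using box bounded_box bounded_subset by blast
  ultimately show "compact S" using compact_eq_bounded_closed by blast
  show "S \<noteq> {}" by (rule ne)
qed

(* Reach turns small clear normal balls into the clear ball of radius 1/(2 kappa), which
   gives the global bound <q - p, v> <= kappa |q - p|^2. *)
lemma reach_normal_bound:
  assumes S: "in_class_S2 TYPE('b::euclidean_space) \<kappa> S" and kappa: "\<kappa> \<ge> 1"
    and pS: "p \<in> S" and v: "norm v = 1"
    and clear: "\<exists>t1>0. \<forall>t. 0 < t \<and> t \<le> t1 \<longrightarrow> normal_clear S p v t" and qS: "q \<in> S"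
  shows "inner (q - p) v \<le> \<kappa> * (norm (q - p))\<^sup>2"
proof -
  obtain t0 where t0: "t0 > 1 / (2 * \<kappa>)" "unique_nearest S t0" using class_S2_basic[OF S kappa] by blast
  obtain t1 where t1: "t1 > 0" "\<forall>t. 0 < t \<and> t \<le> t1 \<longrightarrow> normal_clear S p v t" using clear by blast
  define r where "r = 1 / (2 * \<kappa>)"
  have r: "0 < r" "r < t0" using kappa t0(1) by (simp_all add: r_def)
  have "normal_clear S p v (min t1 r)" using t1 r by simp
  then have "normal_clear S p v r"
    using normal_clear_extend[OF t0(2) _ _ pS v, of "min t1 r" r] class_S2_basic[OF S kappa] t1(1) r
    by simp
  then have "r\<^sup>2 \<le> (dist (p + r *\<^sub>R v) q)\<^sup>2" using qS r by (simp add: normal_clear_def power_mono)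
  then have "2 * r * inner (q - p) v \<le> (norm (q - p))\<^sup>2" using dist_ray_sq[OF v, of p r q] by simp
  then show ?thesis using kappa by (simp add: r_def field_simps)
qed

lemma chart_tangent_space:
  fixes S :: "'a::euclidean_space set"
  assumes "C2_submanifold TYPE('b::euclidean_space) S" "p \<in> S"
  shows "\<exists>T. subspace T \<and> dim T = DIM('b) \<and>
           (\<forall>v. norm v = 1 \<and> (\<forall>w\<in>T. inner w v = 0) \<longrightarrow>
              (\<exists>K>0. \<exists>e>0. \<forall>q\<in>S. dist q p < e \<longrightarrow> inner (q - p) v \<le> K * (norm (q - p))\<^sup>2))"
proof -
  obtain U and V :: "'b set" and \<phi> \<psi> where chart: "open U" "p \<in> U" "open V" "C2_on V \<phi>"
    and hom: "homeomorphism V (S \<inter> U) \<phi> \<psi>"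
    using assms unfolding C2_submanifold_def by blast
  obtain f' f'' where d1: "\<forall>x\<in>V. (\<phi> has_derivative blinfun_apply (f' x)) (at x)"
    and d2: "\<forall>x\<in>V. (f' has_derivative blinfun_apply (f'' x)) (at x)"
    and c2: "continuous_on V f''" and inj: "\<forall>x\<in>V. inj (blinfun_apply (f' x))"
    using chart(4) unfolding C2_on_def by blast
  define u0 where "u0 = \<psi> p"
  have pSU: "p \<in> S \<inter> U" using assms(2) chart(2) by blast
  have u0V: "u0 \<in> V" using homeomorphism_image2[OF hom] pSU unfolding u0_def by blast
  have pu0: "\<phi> u0 = p" using homeomorphism_apply2[OF hom pSU] by (simp add: u0_def)
  define A where "A = blinfun_apply (f' u0)"
  have linA: "linear A" unfolding A_def using blinfun.bounded_linear_right bounded_linear.linear by blast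
  have "dim (range A) = dim (UNIV :: 'b set)"
    by (rule dim_image_eq[OF linA]) (use inj u0V in \<open>auto simp: A_def inj_on_def inj_def\<close>)
  then have "dim (range A) = DIM('b)" by (simp add: dim_UNIV)
  moreover have "subspace (range A)" using linear_subspace_image[OF linA subspace_UNIV] by simp
  moreover have "\<exists>K>0. \<exists>e>0. \<forall>q\<in>S. dist q p < e \<longrightarrow> inner (q - p) v \<le> K * (norm (q - p))\<^sup>2"
    if "norm v = 1" "\<forall>w\<in>range A. inner w v = 0" for v
    using chart_local_quadratic[OF chart(3) u0V d1 d2 c2 _ chart(1) hom pu0] inj u0V that
    unfolding A_def by blast
  ultimately show ?thesis by blast
qed

lemma tangent_bound:
  fixes S :: "'a::euclidean_space set"
  assumes S: "in_class_S2 TYPE('b::euclidean_space) \<kappa> S" and kappa: "\<kappa> \<ge> 1" and pS: "p \<in> S"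
  shows "\<exists>L. affine L \<and> L \<noteq> {} \<and> aff_dim L = int DIM('b) \<and>
             (\<forall>q\<in>S. infdist q L \<le> \<kappa> * (norm (q - p))\<^sup>2)"
proof -
  obtain T where T: "subspace T" "dim T = DIM('b)"
    and quad: "\<And>v. norm v = 1 \<Longrightarrow> \<forall>w\<in>T. inner w v = 0 \<Longrightarrow>
              \<exists>K>0. \<exists>e>0. \<forall>q\<in>S. dist q p < e \<longrightarrow> inner (q - p) v \<le> K * (norm (q - p))\<^sup>2"
    using chart_tangent_space[of S p] S pS unfolding in_class_S2_def by blast
  define L where "L = (\<lambda>x. p + x) ` T"
  have affL: "affine L" unfolding L_def using subspace_imp_affine[OF T(1)] affine_translation[of T p] by simp
  have "L \<noteq> {}" using subspace_0[OF T(1)] by (auto simp: L_def)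
  moreover have "aff_dim L = int DIM('b)"
    unfolding L_def by (simp only: aff_dim_translation_eq aff_dim_subspace[OF T(1)] T(2))
  moreover have "infdist q L \<le> \<kappa> * (norm (q - p))\<^sup>2" if qS: "q \<in> S" for q
  proof -
    obtain y z where y: "y \<in> T" and z: "\<And>w. w \<in> T \<Longrightarrow> orthogonal z w" and yz: "q - p = y + z"
      using orthogonal_subspace_decomp_exists[of T "q - p"] span_eq_iff[of T] T(1) by metis
    have "infdist q L \<le> norm z"
      using infdist_le[of "p + y" L q] y yz by (simp add: L_def dist_norm algebra_simps)
    moreover have "norm z \<le> \<kappa> * (norm (q - p))\<^sup>2"
    proof (cases "z = 0")
      case False
      define v where "v = sgn z"
      have v: "norm v = 1" using False by (simp add: v_def norm_sgn)
      have perp: "\<forall>w\<in>T. inner w v = 0"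
        using z by (simp add: v_def sgn_div_norm orthogonal_def inner_commute)
      obtain K e where "K > 0" "e > 0"
        "\<forall>q\<in>S. dist q p < e \<longrightarrow> inner (q - p) v \<le> K * (norm (q - p))\<^sup>2"
        using quad[OF v perp] by blast
      then have "inner (q - p) v \<le> \<kappa> * (norm (q - p))\<^sup>2"
        using reach_normal_bound[OF S kappa pS v quadratic_normal_clear[OF _ _ v] qS] by blast
      moreover have "inner (q - p) v = norm z"
      proof -
        have "inner y z = 0" using z[OF y] by (simp add: orthogonal_def inner_commute)
        then have "inner (q - p) z = (norm z)\<^sup>2" using yz by (simp add: inner_add_left power2_norm_eq_inner)
        then show ?thesis using False by (simp add: v_def sgn_div_norm power2_eq_square)
      qed
      ultimately show ?thesis by simp
    qed (use kappa in simp)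
    ultimately show ?thesis by simp
  qed
  ultimately show ?thesis using affL by blast
qed

lemma Lambda_less:
  fixes zs :: "'a::euclidean_space list"
  assumes "affine L" "L \<noteq> {}" "aff_dim L = int d" "zs \<noteq> []" "\<forall>z\<in>set zs. infdist z L < \<eta>"
  shows "Lambda d zs < \<eta>"
proof -
  let ?X = "{Max ((\<lambda>z. infdist z L) ` set zs) | L. affine L \<and> L \<noteq> {} \<and> aff_dim L = int d}"
  have fin: "finite ((\<lambda>z. infdist z L') ` set zs)" "(\<lambda>z. infdist z L') ` set zs \<noteq> {}" for L'
    using assms(4) by auto
  have "bdd_below ?X"
  proof (rule bdd_belowI)
    fix x assume "x \<in> ?X"
    then obtain L' where x: "x = Max ((\<lambda>z. infdist z L') ` set zs)" by blast
    obtain z where "z \<in> set zs" using assms(4) by (cases zs) auto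
    then have "infdist z L' \<le> x" unfolding x by (intro Max_ge[OF fin(1)]) simp
    then show "0 \<le> x" using infdist_nonneg[of z L'] by linarith
  qed
  moreover have "Max ((\<lambda>z. infdist z L) ` set zs) \<in> ?X" using assms by blast
  ultimately have "Lambda d zs \<le> Max ((\<lambda>z. infdist z L) ` set zs)"
    unfolding Lambda_def by (rule cInf_lower[rotated])
  also have "\<dots> < \<eta>" using fin[of L] assms(5) by (simp add: Max_less_iff)
  finally show ?thesis .
qed

(* Points within tau of S and within epsilon/2 of a point near S are flat to order
   tau + kappa (epsilon/2 + 2 tau)^2: use the tangent plane at a nearest point of y0. *)
lemma Lambda_less_near_manifold:
  fixes S :: "'a::euclidean_space set" and zs :: "'a list"
  assumes S: "in_class_S2 TYPE('b::euclidean_space) \<kappa> S" and kappa: "\<kappa> \<ge> 1"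
    and eta: "\<eta> \<ge> \<tau> + \<kappa> * (\<epsilon> / 2 + 2 * \<tau>)\<^sup>2"
    and y0: "infdist y0 S < \<tau>" and zs: "zs \<noteq> []"
    and near: "\<forall>z\<in>set zs. infdist z S < \<tau> \<and> dist z y0 < \<epsilon> / 2"
  shows "Lambda DIM('b) zs < \<eta>"
proof -
  have cl: "closed S" and ne: "S \<noteq> {}"
    using class_S2_basic[OF S kappa] compact_imp_closed by auto
  obtain p where pS: "p \<in> S" and dp: "infdist y0 S = dist y0 p" using infdist_attains_inf[OF cl ne] by blast
  obtain L where L: "affine L" "L \<noteq> {}" "aff_dim L = int DIM('b)"
    and flat: "\<forall>q\<in>S. infdist q L \<le> \<kappa> * (norm (q - p))\<^sup>2"
    using tangent_bound[OF S kappa pS] by blast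
  have "infdist z L < \<eta>" if z: "z \<in> set zs" for z
  proof -
    obtain q where qS: "q \<in> S" and dq: "infdist z S = dist z q" using infdist_attains_inf[OF cl ne] by blast
    have zq: "dist z q < \<tau>" using near z dq by metis
    have "norm (q - p) \<le> dist q z + dist z y0 + dist y0 p"
      using dist_triangle[of q p z] dist_triangle[of z p y0] by (simp add: dist_norm)
    also have "\<dots> < \<epsilon> / 2 + 2 * \<tau>"
      using bspec[OF near z] zq y0 dp by (simp add: dist_commute)
    finally have "(norm (q - p))\<^sup>2 \<le> (\<epsilon> / 2 + 2 * \<tau>)\<^sup>2" by (simp add: power_mono)
    then have "\<kappa> * (norm (q - p))\<^sup>2 \<le> \<kappa> * (\<epsilon> / 2 + 2 * \<tau>)\<^sup>2"
      using kappa by (intro mult_left_mono) auto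
    then have "infdist q L \<le> \<kappa> * (\<epsilon> / 2 + 2 * \<tau>)\<^sup>2" using flat qS by force
    moreover have "infdist z L \<le> infdist q L + dist z q" by (rule infdist_triangle)
    ultimately show ?thesis using zq eta by simp
  qed
  then show ?thesis using Lambda_less[OF L zs] by blast
qed

definition distinct_lists :: "'x set \<Rightarrow> nat \<Rightarrow> 'x list set" where
  "distinct_lists A k = {xs. length xs = k \<and> distinct xs \<and> set xs \<subseteq> A}"

(* The library counts distinct lists by the product of the top k factors of N!. *)
lemma prod_top_factors_eq_ffall:
  "k \<le> N \<Longrightarrow> real (\<Prod>{N - k + 1..N}) = ffall (real N) k"
proof (induction k)
  case 0
  then show ?case by (simp add: ffall_def)
next
  case (Suc k)
  have "Suc (N - Suc k) = N - k" using Suc.prems by simp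
  then have "(N - k) * \<Prod>{Suc (N - k)..N} = \<Prod>{Suc (N - Suc k)..N}"
    by (subst prod.insert[symmetric]) (simp add: atLeastAtMost_insertL)+
  then have "real (\<Prod>{N - Suc k + 1..N}) = real (N - k) * real (\<Prod>{N - k + 1..N})"
    by (metis Suc_eq_plus1 of_nat_mult)
  also have "\<dots> = (real N - real k) * ffall (real N) k" using Suc by (simp add: of_nat_diff)
  finally show ?case by (simp add: ffall_def)
qed

lemma card_distinct_lists:
  assumes "finite A"
  shows "real (card (distinct_lists A k)) = ffall (real (card A)) k"
proof (cases "k \<le> card A")
  case True
  then show ?thesis using card_lists_distinct_length_eq[OF assms True] prod_top_factors_eq_ffall[OF True]
    by (simp add: distinct_lists_def)
next
  case False
  have "distinct_lists A k = {}"
  proof (rule equals0I)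
    fix xs assume "xs \<in> distinct_lists A k"
    then have "k = card (set xs)" "card (set xs) \<le> card A"
      using distinct_card[of xs] card_mono[OF assms] by (auto simp: distinct_lists_def)
    then show False using False by simp
  qed
  moreover have "ffall (real (card A)) k = 0"
    unfolding ffall_def using False by (intro prod_zero) auto
  ultimately show ?thesis by simp
qed

abbreviation index_tuples :: "nat \<Rightarrow> nat \<Rightarrow> nat list set" where
  "index_tuples n k \<equiv> {is. length is = k \<and> set is \<subseteq> {1..n}}"

lemma finite_index_tuples: "finite (index_tuples n k)"
  by (rule finite_subset[OF _ finite_lists_length_eq[of "{1..n}" k]]) auto

definition nbhd :: "(nat \<Rightarrow> 'a::metric_space) \<Rightarrow> nat \<Rightarrow> nat \<Rightarrow> real \<Rightarrow> nat set" where
  "nbhd y n i r = {k \<in> {1..n}. k \<noteq> i \<and> y k \<in> ball (y i) r}"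

lemma finite_nbhd [simp]: "finite (nbhd y n i r)"
  by (simp add: nbhd_def)

lemma Gcount_nbhd: "Gcount y n i r = real (card (nbhd y n i r))"
  by (simp add: Gcount_def nbhd_def)

lemma card_nbhd_remove:
  assumes "j \<in> nbhd y n i r"
  shows "real (card (nbhd y n i r - {j})) = Gcount y n i r - 1"
proof -
  have "0 < card (nbhd y n i r)" using assms by (auto simp: card_gt_0_iff)
  then show ?thesis using assms by (simp add: Gcount_nbhd card_Diff_singleton of_nat_diff)
qed

lemma alpha_nonzero_tuple:
  assumes "alpha d \<epsilon> \<eta> (y i # y j # map y is) \<noteq> 0" "set is \<subseteq> {1..n}"
  shows "dist (y i) (y j) < \<epsilon> \<and> is \<in> distinct_lists (nbhd y n i \<epsilon> - {j}) (length is)"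
proof -
  let ?zs = "y i # y j # map y is"
  have dz: "distinct ?zs" and dm: "diameter (set ?zs) < \<epsilon>"
    using assms(1) by (simp_all add: alpha_def split: if_splits)
  have close: "dist a b < \<epsilon>" if "a \<in> set ?zs" "b \<in> set ?zs" for a b
    using diameter_bounded_bound[OF finite_imp_bounded[of "set ?zs"] that] dm by simp
  have "set is \<subseteq> nbhd y n i \<epsilon> - {j}"
  proof
    fix k assume k: "k \<in> set is"
    then have "y k \<in> set (map y is)" by simp
    then have "y k \<noteq> y i" "y k \<noteq> y j" "dist (y i) (y k) < \<epsilon>" using dz close by auto
    then show "k \<in> nbhd y n i \<epsilon> - {j}" using assms(2) k by (auto simp: nbhd_def)
  qed
  moreover have "distinct is" using dz by (simp add: distinct_map)
  ultimately show ?thesis using close by (simp add: distinct_lists_def)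
qed

lemma Wmat_upper:
  assumes "j \<in> {1..n}" "i \<noteq> j"
  shows "Wmat d \<epsilon> \<eta> m y n i j \<le> (if dist (y i) (y j) < \<epsilon> then 1 else 0) * ffall (Gcount y n i \<epsilon> - 1) (m - 2)"
proof -
  let ?a = "\<lambda>is. alpha d \<epsilon> \<eta> (y i # y j # map y is)"
  let ?B = "distinct_lists (nbhd y n i \<epsilon> - {j}) (m - 2)"
  have support: "?a is \<le> of_bool (dist (y i) (y j) < \<epsilon> \<and> is \<in> ?B)" if "is \<in> index_tuples n (m - 2)" for "is"
    using alpha_nonzero_tuple[of d \<epsilon> \<eta> y i j "is" n] that by (auto simp: alpha_def)
  show ?thesis
  proof (cases "dist (y i) (y j) < \<epsilon>")
    case False
    have "Wmat d \<epsilon> \<eta> m y n i j = 0"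
      unfolding Wmat_def using alpha_nonzero_tuple[of d \<epsilon> \<eta> y i j _ n] False by (intro sum.neutral) blast
    then show ?thesis using False by simp
  next
    case True
    have "Wmat d \<epsilon> \<eta> m y n i j \<le> (\<Sum>is\<in>index_tuples n (m - 2). of_bool (is \<in> ?B))"
      unfolding Wmat_def using support True by (intro sum_mono) simp
    also have "\<dots> = real (card ?B)"
    proof -
      have "index_tuples n (m - 2) \<inter> {is. is \<in> ?B} = ?B" by (auto simp: distinct_lists_def nbhd_def)
      then show ?thesis using finite_index_tuples by (simp only: sum_of_bool_eq)
    qed
    also have "\<dots> = ffall (Gcount y n i \<epsilon> - 1) (m - 2)"
    proof -
      have "j \<in> nbhd y n i \<epsilon>" using True assms by (simp add: nbhd_def)
      then show ?thesis by (metis card_distinct_lists card_nbhd_remove finite_Diff finite_nbhd)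
    qed
    finally show ?thesis using True by simp
  qed
qed

lemma Wmat_nonneg: "0 \<le> Wmat d \<epsilon> \<eta> m y n i j"
  unfolding Wmat_def by (intro sum_nonneg) (simp add: alpha_def)

lemma Wmat_diag: "Wmat d \<epsilon> \<eta> m y n i i = 0"
  unfolding Wmat_def by (simp add: alpha_def)

lemma diameter_less_of_close:
  fixes X :: "'a::metric_space set"
  assumes "finite X" "X \<noteq> {}" "\<forall>x\<in>X. dist x c < e / 2"
  shows "diameter X < e"
proof -
  obtain a b where ab: "a \<in> X" "b \<in> X" "dist a b = diameter X"
    using diameter_compact_attained[OF finite_imp_compact] assms(1,2) by blast
  have "dist a b \<le> dist a c + dist b c" using dist_triangle[of a b c] by (simp add: dist_commute)
  also have "\<dots> < e / 2 + e / 2" using assms(3) ab by (intro add_strict_mono) auto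
  finally show ?thesis using ab by simp
qed

(* Every distinct list of (epsilon/2)-neighbours gives a tuple of affinity one: the points
   are distinct by injectivity, have diameter < epsilon, and are flat by the geometry. *)
lemma alpha_one_tuple:
  fixes S :: "'a::euclidean_space set" and y :: "nat \<Rightarrow> 'a"
  assumes S: "in_class_S2 TYPE('b::euclidean_space) \<kappa> S" and kappa: "\<kappa> \<ge> 1"
    and eta: "\<eta> \<ge> \<tau> + \<kappa> * (\<epsilon> / 2 + 2 * \<tau>)\<^sup>2"
    and inj: "inj_on y {1..n}" and near: "\<forall>k\<in>{1..n}. infdist (y k) S < \<tau>"
    and ij: "i \<in> {1..n}" "j \<in> {1..n}" "i \<noteq> j" and close: "dist (y i) (y j) < \<epsilon> / 2"
    and "is": "is \<in> distinct_lists (nbhd y n i (\<epsilon> / 2) - {j}) k"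
  shows "alpha DIM('b) \<epsilon> \<eta> (y i # y j # map y is) = 1"
proof -
  let ?ks = "i # j # is"
  have ks: "distinct ?ks" "set ?ks \<subseteq> {1..n}" using "is" ij by (auto simp: distinct_lists_def nbhd_def)
  have zs: "y i # y j # map y is = map y ?ks" by simp
  have "distinct (map y ?ks)" using ks inj_on_subset[OF inj ks(2)] by (simp only: distinct_map)
  moreover have "\<forall>z\<in>set (map y ?ks). dist z (y i) < \<epsilon> / 2"
  proof -
    have "0 < \<epsilon>" using close zero_le_dist[of "y i" "y j"] by linarith
    then show ?thesis using "is" close by (auto simp: distinct_lists_def nbhd_def dist_commute)
  qed
  moreover have "\<forall>z\<in>set (map y ?ks). infdist z S < \<tau>" using ks(2) near by auto
  ultimately show ?thesis
    unfolding zs alpha_def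
    using diameter_less_of_close[of "set (map y ?ks)" "y i" \<epsilon>]
      Lambda_less_near_manifold[OF S kappa eta, of "y i" "map y ?ks"] near ij(1)
    by auto
qed

lemma Wmat_lower:
  fixes S :: "'a::euclidean_space set" and y :: "nat \<Rightarrow> 'a"
  assumes dim: "DIM('b::euclidean_space) = d"
    and S: "in_class_S2 TYPE('b) \<kappa> S" and kappa: "\<kappa> \<ge> 1"
    and eta: "\<eta> \<ge> \<tau> + \<kappa> * (\<epsilon> / 2 + 2 * \<tau>)\<^sup>2"
    and inj: "inj_on y {1..n}" and near: "\<forall>k\<in>{1..n}. infdist (y k) S < \<tau>"
    and ij: "i \<in> {1..n}" "j \<in> {1..n}" "i \<noteq> j"
  shows "(if dist (y i) (y j) < \<epsilon> / 2 then 1 else 0) * ffall (Gcount y n i (\<epsilon> / 2) - 1) (m - 2)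
           \<le> Wmat d \<epsilon> \<eta> m y n i j"
proof (cases "dist (y i) (y j) < \<epsilon> / 2")
  case True
  let ?B = "distinct_lists (nbhd y n i (\<epsilon> / 2) - {j}) (m - 2)"
  have "j \<in> nbhd y n i (\<epsilon> / 2)" using True ij by (simp add: nbhd_def)
  then have "ffall (Gcount y n i (\<epsilon> / 2) - 1) (m - 2) = real (card ?B)"
    by (metis card_distinct_lists card_nbhd_remove finite_Diff finite_nbhd)
  also have "\<dots> = (\<Sum>is\<in>?B. alpha d \<epsilon> \<eta> (y i # y j # map y is))"
    using alpha_one_tuple[OF S kappa eta inj near ij True] dim by simp
  also have "\<dots> \<le> Wmat d \<epsilon> \<eta> m y n i j"
    unfolding Wmat_def
    by (rule sum_mono2[OF finite_index_tuples]) (auto simp: distinct_lists_def nbhd_def alpha_def)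
  finally show ?thesis using True by simp
qed (simp add: Wmat_nonneg)

lemma sum_nbhd_const:
  "(\<Sum>j=1..n. if j \<in> nbhd y n i r then c else 0) = Gcount y n i r * c"
proof -
  have "(\<Sum>j=1..n. if j \<in> nbhd y n i r then c else 0) = (\<Sum>j\<in>{1..n} \<inter> nbhd y n i r. c)"
    by (rule sum.inter_restrict[symmetric]) simp
  also have "{1..n} \<inter> nbhd y n i r = nbhd y n i r" by (auto simp: nbhd_def)
  finally show ?thesis by (simp add: Gcount_nbhd)
qed

lemma Ddeg_lower:
  assumes "\<And>j. j \<in> {1..n} \<Longrightarrow> j \<noteq> i \<Longrightarrow>
             (if dist (y i) (y j) < r then 1 else 0) * c \<le> Wmat d \<epsilon> \<eta> m y n i j"
  shows "Gcount y n i r * c \<le> Ddeg d \<epsilon> \<eta> m y n i"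
  unfolding Ddeg_def sum_nbhd_const[symmetric]
proof (rule sum_mono)
  fix j assume "j \<in> {1..n}"
  then show "(if j \<in> nbhd y n i r then c else 0) \<le> Wmat d \<epsilon> \<eta> m y n i j"
    using assms[of j] Wmat_nonneg[of d \<epsilon> \<eta> m y n i j] by (auto simp: nbhd_def)
qed

lemma Ddeg_upper:
  assumes "\<And>j. j \<in> {1..n} \<Longrightarrow> j \<noteq> i \<Longrightarrow>
             Wmat d \<epsilon> \<eta> m y n i j \<le> (if dist (y i) (y j) < r then 1 else 0) * c"
  shows "Ddeg d \<epsilon> \<eta> m y n i \<le> Gcount y n i r * c"
  unfolding Ddeg_def sum_nbhd_const[symmetric]
proof (rule sum_mono)
  fix j assume "j \<in> {1..n}"
  then show "Wmat d \<epsilon> \<eta> m y n i j \<le> (if j \<in> nbhd y n i r then c else 0)"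
    using assms[of j] Wmat_diag[of d \<epsilon> \<eta> m y n i] by (cases "j = i") (auto simp: nbhd_def)
qed

(* The main theorem. *)
theorem mainTheorem5:
  fixes S :: "'a::euclidean_space set" and y :: "nat \<Rightarrow> 'a"
    and d m n :: nat and \<kappa> \<epsilon> \<tau> \<eta> :: real
  assumes dim: "DIM('b::euclidean_space) = d" and "1 \<le> d" and "d \<le> DIM('a) - 1"
    and kappa: "\<kappa> \<ge> 1"
    and S: "in_class_S2 TYPE('b) \<kappa> S"
    and "0 < \<tau>" "\<tau> \<le> \<epsilon>"
    and eta: "\<eta> \<ge> \<tau> + \<kappa> * (\<epsilon> / 2 + 2 * \<tau>)\<^sup>2"
    and "m \<ge> d + 2"
    and inj: "inj_on y {1..n}"
    and near: "\<forall>i\<in>{1..n}. infdist (y i) S < \<tau>"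
  shows "(\<forall>i\<in>{1..n}. \<forall>j\<in>{1..n}. i \<noteq> j \<longrightarrow>
            (if dist (y i) (y j) < \<epsilon> / 2 then 1 else 0) * ffall (Gcount y n i (\<epsilon> / 2) - 1) (m - 2)
              \<le> Wmat d \<epsilon> \<eta> m y n i j \<and>
            Wmat d \<epsilon> \<eta> m y n i j
              \<le> (if dist (y i) (y j) < \<epsilon> then 1 else 0) * ffall (Gcount y n i \<epsilon> - 1) (m - 2))
       \<and> (\<forall>i\<in>{1..n}.
            Gcount y n i (\<epsilon> / 2) * ffall (Gcount y n i (\<epsilon> / 2) - 1) (m - 2) \<le> Ddeg d \<epsilon> \<eta> m y n i \<and>
            Ddeg d \<epsilon> \<eta> m y n i \<le> Gcount y n i \<epsilon> * ffall (Gcount y n i \<epsilon> - 1) (m - 2))"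
proof -
  have lower: "(if dist (y i) (y j) < \<epsilon> / 2 then 1 else 0) * ffall (Gcount y n i (\<epsilon> / 2) - 1) (m - 2)
                 \<le> Wmat d \<epsilon> \<eta> m y n i j" if "i \<in> {1..n}" "j \<in> {1..n}" "i \<noteq> j" for i j
    using Wmat_lower[OF dim S kappa eta inj near that] .
  have upper: "Wmat d \<epsilon> \<eta> m y n i j
                 \<le> (if dist (y i) (y j) < \<epsilon> then 1 else 0) * ffall (Gcount y n i \<epsilon> - 1) (m - 2)"
    if "j \<in> {1..n}" "i \<noteq> j" for i j
    using Wmat_upper[OF that] .
  show ?thesis
    using lower upper Ddeg_lower[OF lower] Ddeg_upper[OF upper] by auto
qed

end
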